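(* Let $n,k,l$ be nonnegative integers with $k+l\le n$, let $\alpha,\beta>-1$, set $\sigma=\alpha+\beta+1$, and for $h=k,\ldots,n-l$ and $i=k+l,\ldots,n$ define \[ z_{hi}=\binom{n}{h}\frac{(2i+\sigma)(k+l-n)_{i-k-l}(\alpha+2l+1)_{n-l-h}(\beta+2k+1)_{h-k}}{(\alpha+2l+1)_{i-k-l}\,(i+k+l+\sigma)_{n+1-k-l}},\qquad w_{hi}=Q_{i-k-l}(h-k;\,\beta+2k,\,\alpha+2l,\,n-k-l). \] Then for each fixed $i$ (and whenever the indices involved lie in the range $k\le h\le n-l$): \[ z_{ki}=\binom{n}{k}\frac{(2i+\sigma)(\alpha+l+i+1-k)_{n-i}(k+l-n)_{i-k-l}}{(i+k+l+\sigma)_{n-k-l+1}}, \] \[ z_{hi}=\frac{(n+1-h)(\beta+k+h)}{h(\alpha+l+n+1-h)}\,z_{h-1,i}\qquad(h=k+1,\ldots,n-l); \] and \[ w_{ki}=1,\qquad w_{k+1,i}=1+\frac{(i-k-l)(i+k+l+\sigma)}{(\beta+2k+1)(k+l-n)}, \] \[ w_{hi}=T_i(h)\,w_{h-1,i}+V(h)\,w_{h-2,i}\qquad(h=k+2,\ldots,n-l), \] where \[ V(h)=\frac{(h-k-1)(l+n+\alpha+2-h)}{(h+k+\beta)(h+l-n-1)},\qquad T_i(h)=1-V(h)-\frac{(k+l-i)(i+k+l+\sigma)}{(h+k+\beta)(h+l-n-1)}. \]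
   Context: Pochhammer symbol: $(a)_0=1$, $(a)_j=a(a+1)\cdots(a+j-1)$. Hahn polynomials: for a nonnegative integer $N$, $a,b>-1$ and $m=0,1,\ldots,N$, $Q_m(x;a,b,N)=\sum_{j=0}^m\frac{(-m)_j(m+a+b+1)_j(-x)_j}{j!\,(a+1)_j\,(-N)_j}$. (The products $d_{hi}=z_{hi}w_{hi}$ are the coefficients of the Bernstein polynomial $B^n_h(x)=\binom nh x^h(1-x)^{n-h}$ in the basis of modified Jacobi polynomials $J_{i,k,l}^{(\alpha,\beta)}(x)=(1-x)^lx^kR^{(\alpha+2l,\beta+2k)}_{i-k-l}(x)$, $i=k+l,\ldots,n$, with $R^{(a,b)}_m$ the shifted Jacobi polynomials.) *)

theory Defs
  imports Complex_Main
begin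

definition hahnQ :: "nat \<Rightarrow> real \<Rightarrow> real \<Rightarrow> real \<Rightarrow> nat \<Rightarrow> real" where
  "hahnQ m x a b N = (\<Sum>j=0..m. pochhammer (- real m) j * pochhammer (real m + a + b + 1) j
      * pochhammer (- x) j / (fact j * pochhammer (a + 1) j * pochhammer (- real N) j))"

definition zc :: "nat \<Rightarrow> nat \<Rightarrow> nat \<Rightarrow> real \<Rightarrow> real \<Rightarrow> nat \<Rightarrow> nat \<Rightarrow> real" where
  "zc n k l \<alpha> \<beta> h i = (let \<sigma> = \<alpha> + \<beta> + 1 in
     real (n choose h) * ((2 * real i + \<sigma>) * pochhammer (real k + real l - real n) (i - k - l)
       * pochhammer (\<alpha> + 2 * real l + 1) (n - l - h) * pochhammer (\<beta> + 2 * real k + 1) (h - k))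
     / (pochhammer (\<alpha> + 2 * real l + 1) (i - k - l)
        * pochhammer (real i + real k + real l + \<sigma>) (n + 1 - k - l)))"

definition wc :: "nat \<Rightarrow> nat \<Rightarrow> nat \<Rightarrow> real \<Rightarrow> real \<Rightarrow> nat \<Rightarrow> nat \<Rightarrow> real" where
  "wc n k l \<alpha> \<beta> h i = hahnQ (i - k - l) (real h - real k) (\<beta> + 2 * real k) (\<alpha> + 2 * real l) (n - k - l)"

end

theory Submission
  imports Defs
begin

text \<open>
  When h increases by one, z_hi changes only through the binomial coefficient and the two
  Pochhammer symbols depending on h, each of which gains or loses a single factor; this gives
  the first-order recurrence, and splitting (\<alpha> + 2l + 1)_{n-l-k} at i - k - l gives z_ki.
  The w_hi are the values of a Hahn polynomial at x = h - k, so their three-term recurrence is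
  the second-order difference equation of the Hahn polynomials, solved for Q(x + 1). That
  equation is checked on the basis (-x)_j: the difference operator maps (-x)_{j+1} to a
  combination of (-x)_{j+1} and (-x)_j, and the ratio of consecutive Hahn coefficients makes
  the resulting sum telescope.
\<close>

lemma pochhammer_Suc_diff_pred:
  fixes z :: "'a :: comm_ring_1"
  shows "pochhammer (z - 1) (Suc j) - pochhammer z (Suc j) = - (of_nat j + 1) * pochhammer z j"
proof -
  have "pochhammer (z - 1) (Suc j) = (z - 1) * pochhammer z j"
    by (simp add: pochhammer_rec)
  moreover have "pochhammer z (Suc j) = (z + of_nat j) * pochhammer z j"
    by (rule pochhammer_rec')
  ultimately show ?thesis by (simp add: algebra_simps)
qed

definition hahn_operator :: "real \<Rightarrow> real \<Rightarrow> nat \<Rightarrow> (real \<Rightarrow> real) \<Rightarrow> real \<Rightarrow> real" where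
  "hahn_operator a b N f x = (x + a + 1) * (x - real N) * (f (x + 1) - f x)
      - x * (x - b - real N - 1) * (f x - f (x - 1))"

lemma hahn_operator_sum:
  "hahn_operator a b N (\<lambda>y. \<Sum>j\<in>J. c j * f j y) x = (\<Sum>j\<in>J. c j * hahn_operator a b N (f j) x)"
  by (simp add: hahn_operator_def sum_subtractf[symmetric] sum_distrib_left algebra_simps)

lemma hahn_operator_const: "hahn_operator a b N (\<lambda>y. c) x = 0"
  by (simp add: hahn_operator_def)

lemma hahn_operator_pochhammer_Suc:
  "hahn_operator a b N (\<lambda>y. pochhammer (- y) (Suc j)) x
     = (real j + 1) * (real j + a + b + 2) * pochhammer (- x) (Suc j)
       - (real j + 1) * (real j - real N) * (a + real j + 1) * pochhammer (- x) j"
proof -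
  let ?P = "pochhammer (- x) j" and ?R = "pochhammer (- (x - 1)) j"
  have forward: "pochhammer (- (x + 1)) (Suc j) - pochhammer (- x) (Suc j) = - (real j + 1) * ?P"
    using pochhammer_Suc_diff_pred[of "- x" j] by simp
  have backward: "pochhammer (- x) (Suc j) - pochhammer (- (x - 1)) (Suc j) = - (real j + 1) * ?R"
    using pochhammer_Suc_diff_pred[of "- (x - 1)" j] by simp
  have absorb: "x * ?R = (x - real j) * ?P"
    using pochhammer_absorb_comp[of x j] by (simp add: algebra_simps)
  have Suc: "pochhammer (- x) (Suc j) = (real j - x) * ?P"
    by (simp add: pochhammer_rec' algebra_simps)
  have "hahn_operator a b N (\<lambda>y. pochhammer (- y) (Suc j)) x
      = - (real j + 1) * ((x + a + 1) * (x - real N) * ?P - (x - b - real N - 1) * (x * ?R))"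
    unfolding hahn_operator_def forward backward by (simp add: algebra_simps)
  also have "\<dots> = - (real j + 1) * ((x + a + 1) * (x - real N) - (x - b - real N - 1) * (x - real j)) * ?P"
    unfolding absorb by (simp add: algebra_simps)
  also have "\<dots> = (real j + 1) * (real j + a + b + 2) * ((real j - x) * ?P)
       - (real j + 1) * (real j - real N) * (a + real j + 1) * ?P"
    by (simp add: algebra_simps)
  finally show ?thesis unfolding Suc .
qed

definition hahn_coeff :: "nat \<Rightarrow> real \<Rightarrow> real \<Rightarrow> nat \<Rightarrow> nat \<Rightarrow> real" where
  "hahn_coeff m a b N j = pochhammer (- real m) j * pochhammer (real m + a + b + 1) j
      / (fact j * pochhammer (a + 1) j * pochhammer (- real N) j)"

lemma hahnQ_eq_sum: "hahnQ m x a b N = (\<Sum>j\<le>m. hahn_coeff m a b N j * pochhammer (- x) j)"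
  unfolding hahnQ_def hahn_coeff_def atLeast0AtMost by (rule sum.cong) auto

lemma hahn_coeff_0 [simp]: "hahn_coeff m a b N 0 = 1"
  by (simp add: hahn_coeff_def)

lemma hahn_coeff_Suc:
  assumes "a > -1" and "j < m" and "m \<le> N"
  shows "hahn_coeff m a b N (Suc j) * ((real j + 1) * (real j - real N) * (a + real j + 1))
       = hahn_coeff m a b N j * ((real j - real m) * (real j + real m + a + b + 1))"
proof -
  let ?D = "(real j + 1) * (real j - real N) * (a + real j + 1)"
  have "pochhammer (a + 1) j \<noteq> 0"
    using assms by (intro pochhammer_pos[THEN less_imp_neq, symmetric]) simp
  moreover have "pochhammer (- real N) j \<noteq> 0"
    using assms by (auto simp: pochhammer_eq_0_iff)
  moreover have "?D \<noteq> 0"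
    using assms by simp
  ultimately have "hahn_coeff m a b N (Suc j)
      = hahn_coeff m a b N j * ((real j - real m) * (real j + real m + a + b + 1) / ?D)"
    unfolding hahn_coeff_def pochhammer_rec'[of _ j] fact_Suc by (simp add: field_simps)
  with \<open>?D \<noteq> 0\<close> show ?thesis
    by simp
qed

theorem hahnQ_difference_equation:
  assumes "a > -1" and "m \<le> N"
  shows "hahn_operator a b N (\<lambda>y. hahnQ m y a b N) x = real m * (real m + a + b + 1) * hahnQ m x a b N"
proof -
  let ?A = "hahn_coeff m a b N" and ?p = "\<lambda>j. pochhammer (- x) j"
  define e where "e j = real j * (real j + a + b + 1)" for j :: nat
  define g where "g j = ?A j * e j * ?p j" for j
  have summand: "?A (Suc j) * hahn_operator a b N (\<lambda>y. pochhammer (- y) (Suc j)) x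
      = g (Suc j) - g j + e m * (?A j * ?p j)" if "j < m" for j
  proof -
    have "?A (Suc j) * hahn_operator a b N (\<lambda>y. pochhammer (- y) (Suc j)) x
        = g (Suc j) - ?A (Suc j) * ((real j + 1) * (real j - real N) * (a + real j + 1)) * ?p j"
      unfolding hahn_operator_pochhammer_Suc g_def e_def by (simp add: algebra_simps)
    also have "\<dots> = g (Suc j) - ?A j * ((real j - real m) * (real j + real m + a + b + 1)) * ?p j"
      using hahn_coeff_Suc[OF assms(1) that assms(2)] by simp
    finally show ?thesis
      unfolding g_def e_def by (simp add: algebra_simps)
  qed
  have "hahn_operator a b N (\<lambda>y. hahnQ m y a b N) x
      = (\<Sum>j\<le>m. ?A j * hahn_operator a b N (\<lambda>y. pochhammer (- y) j) x)"
    unfolding hahnQ_eq_sum by (rule hahn_operator_sum)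
  also have "\<dots> = (\<Sum>j<m. ?A (Suc j) * hahn_operator a b N (\<lambda>y. pochhammer (- y) (Suc j)) x)"
    unfolding lessThan_Suc_atMost[symmetric] sum.lessThan_Suc_shift by (simp add: hahn_operator_const)
  also have "\<dots> = (\<Sum>j<m. g (Suc j) - g j) + e m * (\<Sum>j<m. ?A j * ?p j)"
    by (simp add: summand sum.distrib sum_distrib_left)
  also have "\<dots> = e m * (\<Sum>j\<le>m. ?A j * ?p j)"
    unfolding sum_lessThan_telescope sum.atMost_Suc lessThan_Suc_atMost[symmetric]
    by (simp add: g_def e_def algebra_simps)
  finally show ?thesis
    unfolding hahnQ_eq_sum e_def .
qed

lemma hahnQ_at_0: "hahnQ m 0 a b N = 1"
  unfolding hahnQ_eq_sum lessThan_Suc_atMost[symmetric] sum.lessThan_Suc_shift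
  by (simp add: pochhammer_0_left)

lemma hahnQ_at_1: "hahnQ m 1 a b N = 1 + real m * (real m + a + b + 1) / ((a + 1) * - real N)"
proof -
  have "pochhammer (- 1 :: real) (Suc j) = (if j = 0 then - 1 else 0)" for j
    by (simp add: pochhammer_rec pochhammer_0_left)
  then have "hahnQ m 1 a b N = 1 - (if m = 0 then 0 else hahn_coeff m a b N 1)"
    unfolding hahnQ_eq_sum lessThan_Suc_atMost[symmetric] sum.lessThan_Suc_shift
    by (simp add: if_distrib[of "\<lambda>t. _ * t"] sum.delta' cong: if_cong)
  then show ?thesis
    by (simp add: hahn_coeff_def)
qed

lemma hahnQ_three_term:
  assumes "a > -1" and "m \<le> N" and "(x + a + 1) * (x - real N) \<noteq> 0"
  shows "hahnQ m (x + 1) a b N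
      = (1 + (x * (x - b - real N - 1) + real m * (real m + a + b + 1)) / ((x + a + 1) * (x - real N)))
          * hahnQ m x a b N
        - x * (x - b - real N - 1) / ((x + a + 1) * (x - real N)) * hahnQ m (x - 1) a b N"
proof -
  define B where "B = (x + a + 1) * (x - real N)"
  define D where "D = x * (x - b - real N - 1)"
  define E where "E = real m * (real m + a + b + 1)"
  have "B \<noteq> 0"
    using assms(3) by (simp add: B_def)
  have "B * (hahnQ m (x + 1) a b N - hahnQ m x a b N)
      = (D + E) * hahnQ m x a b N - D * hahnQ m (x - 1) a b N"
    using hahnQ_difference_equation[OF assms(1,2), of b x]
    unfolding hahn_operator_def B_def D_def E_def by (simp add: algebra_simps)
  then have "hahnQ m (x + 1) a b N - hahnQ m x a b N
      = ((D + E) * hahnQ m x a b N - D * hahnQ m (x - 1) a b N) / B"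
    using \<open>B \<noteq> 0\<close> by (metis nonzero_mult_div_cancel_left)
  then have Q: "hahnQ m (x + 1) a b N
      = hahnQ m x a b N + ((D + E) * hahnQ m x a b N - D * hahnQ m (x - 1) a b N) / B"
    by (simp add: diff_eq_eq)
  show ?thesis
    unfolding B_def[symmetric] D_def[symmetric] E_def[symmetric] Q
    using \<open>B \<noteq> 0\<close> by (simp add: field_simps)
qed

lemma wc_lowest: "wc n k l \<alpha> \<beta> k i = 1"
  by (simp add: wc_def hahnQ_at_0)

lemma wc_second_lowest:
  assumes "k + l \<le> i" and "k + l \<le> n"
  shows "wc n k l \<alpha> \<beta> (k + 1) i = 1 + (real i - real k - real l) * (real i + real k + real l + (\<alpha> + \<beta> + 1))
      / ((\<beta> + 2 * real k + 1) * (real k + real l - real n))"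
  using assms by (simp add: wc_def hahnQ_at_1 of_nat_diff algebra_simps)

lemma wc_three_term:
  fixes \<alpha> \<beta> :: real
  assumes "\<beta> > -1" and "k + l \<le> i" and "i \<le> n" and "k + 2 \<le> h" and "h + l \<le> n"
  defines "B \<equiv> (real h + real k + \<beta>) * (real h + real l - real n - 1)"
  defines "V \<equiv> (real h - real k - 1) * (real l + real n + \<alpha> + 2 - real h) / B"
  shows "wc n k l \<alpha> \<beta> h i
    = (1 - V - (real k + real l - real i) * (real i + real k + real l + (\<alpha> + \<beta> + 1)) / B) * wc n k l \<alpha> \<beta> (h - 1) i
      + V * wc n k l \<alpha> \<beta> (h - 2) i"
proof -
  define x where "x = real h - real k - 1"
  define a where "a = \<beta> + 2 * real k"
  define b where "b = \<alpha> + 2 * real l"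
  define D where "D = x * (x - b - real (n - k - l) - 1)"
  define E where "E = real (i - k - l) * (real (i - k - l) + a + b + 1)"
  have wc: "wc n k l \<alpha> \<beta> h i = hahnQ (i - k - l) (x + 1) a b (n - k - l)"
      "wc n k l \<alpha> \<beta> (h - 1) i = hahnQ (i - k - l) x a b (n - k - l)"
      "wc n k l \<alpha> \<beta> (h - 2) i = hahnQ (i - k - l) (x - 1) a b (n - k - l)"
    using assms unfolding wc_def x_def a_def b_def by (simp_all add: of_nat_diff algebra_simps)
  have B: "(x + a + 1) * (x - real (n - k - l)) = B"
    using assms unfolding x_def a_def B_def by (simp add: of_nat_diff algebra_simps)
  have "B \<noteq> 0"
    using assms unfolding B_def by auto
  have "a > -1" and "i - k - l \<le> n - k - l"
    using assms unfolding a_def by auto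
  then have "hahnQ (i - k - l) (x + 1) a b (n - k - l)
      = (1 + (D + E) / B) * hahnQ (i - k - l) x a b (n - k - l) - D / B * hahnQ (i - k - l) (x - 1) a b (n - k - l)"
    using hahnQ_three_term[of a "i - k - l" "n - k - l" x b] \<open>B \<noteq> 0\<close>
    unfolding B D_def E_def by simp
  moreover have "D = - ((real h - real k - 1) * (real l + real n + \<alpha> + 2 - real h))"
    using assms(2-5) unfolding D_def x_def b_def by (simp add: of_nat_diff algebra_simps)
  then have "D / B = - V"
    unfolding V_def by simp
  moreover have "E = - ((real k + real l - real i) * (real i + real k + real l + (\<alpha> + \<beta> + 1)))"
    using assms(2-5) unfolding E_def a_def b_def by (simp add: of_nat_diff algebra_simps)
  ultimately show ?thesis
    unfolding wc by (simp add: add_divide_distrib diff_divide_distrib)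
qed

lemma zc_lowest:
  assumes "\<alpha> > -1" and "k + l \<le> i" and "i \<le> n"
  shows "zc n k l \<alpha> \<beta> k i = real (n choose k) * ((2 * real i + (\<alpha> + \<beta> + 1))
            * pochhammer (\<alpha> + real l + real i + 1 - real k) (n - i)
            * pochhammer (real k + real l - real n) (i - k - l))
          / pochhammer (real i + real k + real l + (\<alpha> + \<beta> + 1)) (n - k - l + 1)"
proof -
  have cancel: "C * (X * P * (c * Q) * 1) / (c * R) = C * (X * Q * P) / R"
    if "c \<noteq> 0" for C X P Q R c :: real
    using that by (simp add: field_simps)
  have "n - l - k = (i - k - l) + (n - i)"
    using assms by simp
  moreover have "\<alpha> + 2 * real l + 1 + real (i - k - l) = \<alpha> + real l + real i + 1 - real k"
    using assms by (simp add: of_nat_diff)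
  ultimately have split: "pochhammer (\<alpha> + 2 * real l + 1) (n - l - k)
      = pochhammer (\<alpha> + 2 * real l + 1) (i - k - l) * pochhammer (\<alpha> + real l + real i + 1 - real k) (n - i)"
    by (simp only: pochhammer_product')
  have nonzero: "pochhammer (\<alpha> + 2 * real l + 1) (i - k - l) \<noteq> 0"
    using assms by (intro pochhammer_pos[THEN less_imp_neq, symmetric]) simp
  have index: "n + 1 - k - l = n - k - l + 1"
    using assms by simp
  show ?thesis
    unfolding zc_def Let_def split index diff_self_eq_0 pochhammer_0 by (rule cancel[OF nonzero])
qed

lemma choose_Suc_ratio: "Suc g * (n choose Suc g) = (n - g) * (n choose g)"
  by (metis binomial_absorption binomial_absorb_comp)

lemma zc_ratio:
  assumes "\<alpha> > -1" and "k + 1 \<le> h" and "h + l \<le> n"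
  shows "zc n k l \<alpha> \<beta> h i = (real n + 1 - real h) * (\<beta> + real k + real h)
      / (real h * (\<alpha> + real l + real n + 1 - real h)) * zc n k l \<alpha> \<beta> (h - 1) i"
proof -
  obtain g where h: "h = Suc g"
    using assms(2) by (cases h) auto
  have cancel: "Ch * (X * P * Pa * (Pb * v)) / D = u * v / (r * c) * (Cg * (X * P * (Pa * c) * Pb) / D)"
    if "r \<noteq> 0" and "c \<noteq> 0" and "Ch * r = Cg * u" for Ch Cg X P Pa Pb D u v c r :: real
  proof -
    have Ch: "Ch = Cg * u / r"
      using that by (simp add: field_simps)
    show ?thesis
      unfolding Ch using that by (cases "D = 0") (simp_all add: field_simps)
  qed
  have "real (Suc g) * real (n choose Suc g) = real (n - g) * real (n choose g)"
    by (metis choose_Suc_ratio of_nat_mult)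
  then have binomial: "real (n choose h) * real h = real (n choose g) * (real n + 1 - real h)"
    using assms unfolding h by (simp add: of_nat_diff algebra_simps)
  have "n - l - g = Suc (n - l - h)" and "real (n - l - h) = real n - real l - real h"
    using assms unfolding h by (simp_all add: of_nat_diff)
  then have alpha_factor: "pochhammer (\<alpha> + 2 * real l + 1) (n - l - g)
      = pochhammer (\<alpha> + 2 * real l + 1) (n - l - h) * (\<alpha> + real l + real n + 1 - real h)"
    by (simp add: pochhammer_Suc algebra_simps)
  have "h - k = Suc (g - k)" and "real (g - k) = real g - real k"
    using assms unfolding h by (simp_all add: of_nat_diff)
  then have beta_factor: "pochhammer (\<beta> + 2 * real k + 1) (h - k)
      = pochhammer (\<beta> + 2 * real k + 1) (g - k) * (\<beta> + real k + real h)"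
    by (simp add: h pochhammer_Suc algebra_simps)
  have "real h \<noteq> 0" and "\<alpha> + real l + real n + 1 - real h \<noteq> 0"
    using assms by simp_all
  moreover have "h - 1 = g"
    by (simp add: h)
  ultimately show ?thesis
    unfolding zc_def Let_def \<open>h - 1 = g\<close> alpha_factor beta_factor by (intro cancel binomial)
qed

theorem theorem4:
  fixes n k l i :: nat and \<alpha> \<beta> :: real
  assumes "k + l \<le> n" and "\<alpha> > -1" and "\<beta> > -1"
    and "k + l \<le> i" and "i \<le> n"
  defines "\<sigma> \<equiv> \<alpha> + \<beta> + 1"
  defines "V \<equiv> (\<lambda>h::nat. (real h - real k - 1) * (real l + real n + \<alpha> + 2 - real h)
                  / ((real h + real k + \<beta>) * (real h + real l - real n - 1)))"
  defines "T \<equiv> (\<lambda>h::nat. 1 - V h - (real k + real l - real i) * (real i + real k + real l + \<sigma>)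
                  / ((real h + real k + \<beta>) * (real h + real l - real n - 1)))"
  shows "zc n k l \<alpha> \<beta> k i = real (n choose k) * ((2 * real i + \<sigma>)
            * pochhammer (\<alpha> + real l + real i + 1 - real k) (n - i)
            * pochhammer (real k + real l - real n) (i - k - l))
          / pochhammer (real i + real k + real l + \<sigma>) (n - k - l + 1)
    \<and> (\<forall>h. k + 1 \<le> h \<and> h \<le> n - l \<longrightarrow>
          zc n k l \<alpha> \<beta> h i = (real n + 1 - real h) * (\<beta> + real k + real h)
            / (real h * (\<alpha> + real l + real n + 1 - real h)) * zc n k l \<alpha> \<beta> (h - 1) i)
    \<and> wc n k l \<alpha> \<beta> k i = 1
    \<and> (k + 1 \<le> n - l \<longrightarrow> wc n k l \<alpha> \<beta> (k + 1) i =
          1 + (real i - real k - real l) * (real i + real k + real l + \<sigma>)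
            / ((\<beta> + 2 * real k + 1) * (real k + real l - real n)))
    \<and> (\<forall>h. k + 2 \<le> h \<and> h \<le> n - l \<longrightarrow>
          wc n k l \<alpha> \<beta> h i = T h * wc n k l \<alpha> \<beta> (h - 1) i + V h * wc n k l \<alpha> \<beta> (h - 2) i)"
proof (intro conjI allI impI)
  show "zc n k l \<alpha> \<beta> k i = real (n choose k) * ((2 * real i + \<sigma>)
            * pochhammer (\<alpha> + real l + real i + 1 - real k) (n - i)
            * pochhammer (real k + real l - real n) (i - k - l))
          / pochhammer (real i + real k + real l + \<sigma>) (n - k - l + 1)"
    unfolding \<sigma>_def using assms(2,4,5) by (rule zc_lowest)
next
  fix h
  assume "k + 1 \<le> h \<and> h \<le> n - l"
  with assms(1,2) show "zc n k l \<alpha> \<beta> h i = (real n + 1 - real h) * (\<beta> + real k + real h)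
      / (real h * (\<alpha> + real l + real n + 1 - real h)) * zc n k l \<alpha> \<beta> (h - 1) i"
    by (intro zc_ratio) auto
next
  show "wc n k l \<alpha> \<beta> k i = 1"
    by (rule wc_lowest)
next
  show "wc n k l \<alpha> \<beta> (k + 1) i = 1 + (real i - real k - real l) * (real i + real k + real l + \<sigma>)
      / ((\<beta> + 2 * real k + 1) * (real k + real l - real n))"
    unfolding \<sigma>_def using assms(4,1) by (rule wc_second_lowest)
next
  fix h
  assume "k + 2 \<le> h \<and> h \<le> n - l"
  with assms(1,3-5) show "wc n k l \<alpha> \<beta> h i = T h * wc n k l \<alpha> \<beta> (h - 1) i + V h * wc n k l \<alpha> \<beta> (h - 2) i"
    unfolding T_def V_def \<sigma>_def by (intro wc_three_term) auto
qed

end
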